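(* Let $W\in\mathcal{C}$ be a local minimiser of $\mathcal{L}$ in $\mathcal{C}$, i.e. there is $\delta>0$ such that $\mathcal{L}(W)\le\mathcal{L}(U)$ for all $U\in\mathcal{C}$ with $\|U-W\|_{L^2}<\delta$. Then $W$ solves the front equation $W=\mathcal{T}[W]$.
   Context: Let $\Phi:\mathbb{R}\to\mathbb{R}$ be twice continuously differentiable with: $\Phi'(-1)=-1$, $\Phi'(1)=1$; $\Phi''\ge0$ on $[-1,1]$; $\Phi(-1)=\Phi(1)$; $\Phi''(-1)<1$, $\Phi''(1)<1$; and $g_\Phi(w):=\int_{-1}^w(v-\Phi'(v))\,dv>0$ for all $w\in(-1,1)$. $(\mathcal{A}U)(\varphi)=\int_{\varphi-1/2}^{\varphi+1/2}U(s)\,ds$; $W_{\rm sh}(\varphi)=\mathrm{sgn}(\varphi)$; $\mathcal{H}=\{W \text{ measurable}: W_{\rm sh}-W\in L^2(\mathbb{R})\}$; $\mathcal{T}[W]=\mathcal{A}(\Phi'(\mathcal{A}W))$; $\mathcal{L}(W)=\int_{\mathbb{R}}(\tfrac12W^2-\Phi(\mathcal{A}W))-(\tfrac12W_{\rm sh}^2-\Phi(\mathcal{A}W_{\rm sh}))\,d\varphi$. $\mathcal{C}$ is the set of $W\in\mathcal{H}$ that are a.e. equal to a nondecreasing function with $W(\varphi)\to-1$ as $\varphi\to-\infty$ and $W(\varphi)\to1$ as $\varphi\to+\infty$. *)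

theory Defs
  imports "HOL-Analysis.Analysis"
begin

definition avg :: "(real \<Rightarrow> real) \<Rightarrow> real \<Rightarrow> real" where
  "avg U \<phi> = (LINT s:{\<phi> - 1/2 .. \<phi> + 1/2}|lborel. U s)"

definition Wsh :: "real \<Rightarrow> real" where
  "Wsh \<phi> = sgn \<phi>"

definition Hspace :: "(real \<Rightarrow> real) set" where
  "Hspace = {W. W \<in> borel_measurable lborel \<and>
                integrable lborel (\<lambda>\<phi>. (Wsh \<phi> - W \<phi>)\<^sup>2)}"

definition L2norm :: "(real \<Rightarrow> real) \<Rightarrow> real" where
  "L2norm f = sqrt (integral\<^sup>L lborel (\<lambda>\<phi>. (f \<phi>)\<^sup>2))"

definition Top :: "(real \<Rightarrow> real) \<Rightarrow> (real \<Rightarrow> real) \<Rightarrow> real \<Rightarrow> real" where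
  "Top dPhi W = avg (\<lambda>\<phi>. dPhi (avg W \<phi>))"

definition Lfun :: "(real \<Rightarrow> real) \<Rightarrow> (real \<Rightarrow> real) \<Rightarrow> real" where
  "Lfun Phi W = integral\<^sup>L lborel (\<lambda>\<phi>.
      (1/2 * (W \<phi>)\<^sup>2 - Phi (avg W \<phi>)) - (1/2 * (Wsh \<phi>)\<^sup>2 - Phi (avg Wsh \<phi>)))"

definition Ccone :: "(real \<Rightarrow> real) set" where
  "Ccone = {W \<in> Hspace. \<exists>f. mono f \<and> (AE \<phi> in lborel. W \<phi> = f \<phi>) \<and>
                 (f \<longlongrightarrow> -1) at_bot \<and> (f \<longlongrightarrow> 1) at_top}"

end

theory Submission
  imports Defs
begin

text \<open>
  Write \<open>V = T[W] - W\<close>. Since \<open>\<A>\<close> is symmetric, the first variation of \<open>\<L>\<close> at \<open>W\<close> in the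
  direction \<open>V\<close> is \<open>\<integral> W V - \<integral> \<Phi>'(\<A>W) \<A>V = \<integral> (W - T[W]) V = -\<parallel>V\<parallel>\<^sup>2\<close>, and since \<open>\<Phi>'\<close> is
  Lipschitz on \<open>[-1,1]\<close> the second order remainder is \<open>O(t\<^sup>2)\<close>. Averaging preserves monotonicity
  and \<open>\<Phi>'\<close> is nondecreasing on \<open>[-1,1]\<close>, so \<open>T\<close> maps the cone into itself and \<open>W + t V\<close> stays in
  the cone for \<open>t \<in> [0,1]\<close>. Hence \<open>\<L>(W + t V) \<le> \<L>(W) - t \<parallel>V\<parallel>\<^sup>2 + O(t\<^sup>2)\<close>, and local minimality
  forces \<open>V = 0\<close>.
\<close>

section \<open>Window averages\<close>

lemma integrable_indicator_Icc: "integrable lborel (indicator {a..b::real} :: real \<Rightarrow> real)"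
  by (rule integrable_real_indicator) (auto simp: emeasure_lborel_Icc_eq)

lemma integral_indicator_Icc: "(LBINT x. indicator {a..b::real} x) = (if a \<le> b then b - a else 0)"
  by (simp add: integral_indicator)

lemma avg_eq_window_integral: "avg q x = (LBINT u. indicator {-1/2..1/2::real} u * q (x + u))"
proof -
  have "avg q x = (LBINT s. indicator {x-1/2..x+1/2} s * q s)"
    unfolding avg_def set_lebesgue_integral_def by simp
  also have "\<dots> = (LBINT u. indicator {x-1/2..x+1/2} (x + 1*u) * q (x + 1*u))"
    using lborel_integral_real_affine[of 1 "\<lambda>s. indicator {x-1/2..x+1/2} s * q s" x] by simp
  also have "\<dots> = (LBINT u. indicator {-1/2..1/2::real} u * q (x + u))"
    by (rule Bochner_Integration.integral_cong) (auto simp: indicator_def)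
  finally show ?thesis .
qed

(* Deliberately not a [measurable] rule: as a conditional rule it makes the measurability
   solver used by simp loop. *)
lemma measurable_avg:
  assumes [measurable]: "q \<in> borel_measurable borel"
  shows "avg q \<in> borel_measurable borel"
proof -
  have "(\<lambda>(x, u). indicator {-1/2..1/2::real} u * q (x + u)) \<in> borel_measurable (lborel \<Otimes>\<^sub>M lborel)"
    by measurable
  then have "(\<lambda>x. LBINT u. indicator {-1/2..1/2::real} u * q (x + u)) \<in> borel_measurable lborel"
    by (rule lborel.borel_measurable_lebesgue_integral)
  moreover have "avg q = (\<lambda>x. LBINT u. indicator {-1/2..1/2::real} u * q (x + u))"
    by (rule ext) (rule avg_eq_window_integral)
  ultimately show ?thesis
    by simp
qed

lemma avg_cong_AE:
  assumes "AE x in lborel. W x = f x"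
    and [measurable]: "W \<in> borel_measurable borel" "f \<in> borel_measurable borel"
  shows "avg W = avg f"
proof
  fix x
  show "avg W x = avg f x"
    unfolding avg_def
  proof (rule set_lebesgue_integral_cong_AE)
    show "AE s \<in> {x - 1/2..x + 1/2} in lborel. W s = f s"
      using assms(1) by eventually_elim simp
  qed (use assms(2,3) in simp_all)
qed

lemma integrable_window:
  fixes q :: "real \<Rightarrow> real"
  assumes "q \<in> borel_measurable borel" and "\<And>y. \<bar>q y\<bar> \<le> B"
  shows "integrable lborel (\<lambda>u. indicator {a..b} u * q (x + u))"
proof (rule Bochner_Integration.integrable_bound)
  show "integrable lborel (\<lambda>u. B * indicator {a..b} u :: real)"
    by (intro integrable_mult_right integrable_indicator_Icc)
  show "(\<lambda>u. indicator {a..b} u * q (x + u)) \<in> borel_measurable lborel"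
    using assms(1) by measurable
  show "AE u in lborel. norm (indicator {a..b} u * q (x + u)) \<le> norm (B * indicator {a..b} u :: real)"
  proof (rule AE_I2)
    fix u
    have "\<bar>q (x + u)\<bar> \<le> B" "0 \<le> B"
      using assms(2)[of "x + u"] assms(2)[of 0] by auto
    then show "norm (indicator {a..b} u * q (x + u)) \<le> norm (B * indicator {a..b} u :: real)"
      by (simp add: indicator_def)
  qed
qed

lemma abs_avg_le:
  fixes q :: "real \<Rightarrow> real"
  assumes "q \<in> borel_measurable borel" and "\<And>y. \<bar>q y\<bar> \<le> B"
  shows "\<bar>avg q x\<bar> \<le> B"
proof -
  have "\<bar>avg q x\<bar> \<le> (LBINT u. norm (indicator {-1/2..1/2::real} u * q (x + u)))"
    unfolding avg_eq_window_integral using integral_norm_bound by (metis real_norm_def)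
  also have "\<dots> \<le> (LBINT u. B * indicator {-1/2..1/2::real} u)"
    by (rule integral_mono[OF integrable_norm[OF integrable_window[OF assms]]
          integrable_mult_right[OF integrable_indicator_Icc]])
       (use assms(2) in \<open>auto simp: indicator_def\<close>)
  also have "\<dots> = B"
    by (simp add: integral_indicator_Icc)
  finally show ?thesis .
qed

lemma avg_add_scaled:
  fixes q1 q2 :: "real \<Rightarrow> real"
  assumes "q1 \<in> borel_measurable borel" and "\<And>y. \<bar>q1 y\<bar> \<le> B1"
    and "q2 \<in> borel_measurable borel" and "\<And>y. \<bar>q2 y\<bar> \<le> B2"
  shows "avg (\<lambda>y. q1 y + c * q2 y) x = avg q1 x + c * avg q2 x"
  unfolding avg_eq_window_integral
  using integrable_window[OF assms(1,2), of "-1/2" "1/2" x] integrable_window[OF assms(3,4), of "-1/2" "1/2" x]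
  by (simp add: distrib_left mult.left_commute)

lemma avg_le_shift:
  fixes q :: "real \<Rightarrow> real"
  assumes "mono q" and "\<And>y. \<bar>q y\<bar> \<le> B"
  shows "avg q x \<le> q (x + 1/2)"
proof -
  have "avg q x \<le> (LBINT u. q (x + 1/2) * indicator {-1/2..1/2::real} u)"
    unfolding avg_eq_window_integral
    by (rule integral_mono[OF integrable_window[OF borel_measurable_mono[OF assms(1)] assms(2)]
          integrable_mult_right[OF integrable_indicator_Icc]])
       (auto simp: indicator_def intro!: monoD[OF assms(1)])
  then show ?thesis
    by (simp add: integral_indicator_Icc)
qed

lemma shift_le_avg:
  fixes q :: "real \<Rightarrow> real"
  assumes "mono q" and "\<And>y. \<bar>q y\<bar> \<le> B"
  shows "q (x - 1/2) \<le> avg q x"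
proof -
  have "(LBINT u. q (x - 1/2) * indicator {-1/2..1/2::real} u) \<le> avg q x"
    unfolding avg_eq_window_integral
    by (rule integral_mono[OF integrable_mult_right[OF integrable_indicator_Icc]
          integrable_window[OF borel_measurable_mono[OF assms(1)] assms(2)]])
       (auto simp: indicator_def intro!: monoD[OF assms(1)])
  then show ?thesis
    by (simp add: integral_indicator_Icc)
qed

lemma mono_avg:
  fixes q :: "real \<Rightarrow> real"
  assumes "mono q" and "\<And>y. \<bar>q y\<bar> \<le> B"
  shows "mono (avg q)"
proof (rule monoI)
  fix x y :: real
  assume "x \<le> y"
  have q: "q \<in> borel_measurable borel"
    using assms(1) by (rule borel_measurable_mono)
  show "avg q x \<le> avg q y"
    unfolding avg_eq_window_integral
    by (rule integral_mono[OF integrable_window[OF q assms(2)] integrable_window[OF q assms(2)]])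
       (use \<open>x \<le> y\<close> in \<open>auto simp: indicator_def intro!: monoD[OF assms(1)]\<close>)
qed

lemma tendsto_avg_at_top:
  fixes q :: "real \<Rightarrow> real"
  assumes "mono q" and "\<And>y. \<bar>q y\<bar> \<le> B" and "(q \<longlongrightarrow> L) at_top"
  shows "(avg q \<longlongrightarrow> L) at_top"
proof (rule tendsto_sandwich)
  have shift: "filterlim (\<lambda>x. x + c) at_top at_top" for c :: real
    by (subst add.commute) (rule filterlim_tendsto_add_at_top[OF tendsto_const filterlim_ident])
  show "((\<lambda>x. q (x - 1/2)) \<longlongrightarrow> L) at_top" "((\<lambda>x. q (x + 1/2)) \<longlongrightarrow> L) at_top"
    using filterlim_compose[OF assms(3) shift[of "-1/2"]] filterlim_compose[OF assms(3) shift[of "1/2"]]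
    by simp_all
  show "\<forall>\<^sub>F x in at_top. q (x - 1/2) \<le> avg q x" "\<forall>\<^sub>F x in at_top. avg q x \<le> q (x + 1/2)"
    using shift_le_avg[OF assms(1,2)] avg_le_shift[OF assms(1,2)] by simp_all
qed

lemma tendsto_avg_at_bot:
  fixes q :: "real \<Rightarrow> real"
  assumes "mono q" and "\<And>y. \<bar>q y\<bar> \<le> B" and "(q \<longlongrightarrow> L) at_bot"
  shows "(avg q \<longlongrightarrow> L) at_bot"
proof (rule tendsto_sandwich)
  have shift: "filterlim (\<lambda>x. x + c) at_bot at_bot" for c :: real
    using filterlim_tendsto_add_at_bot_iff[OF tendsto_const, of c "\<lambda>x. x" at_bot] filterlim_ident
    by (simp add: add.commute)
  show "((\<lambda>x. q (x - 1/2)) \<longlongrightarrow> L) at_bot" "((\<lambda>x. q (x + 1/2)) \<longlongrightarrow> L) at_bot"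
    using filterlim_compose[OF assms(3) shift[of "-1/2"]] filterlim_compose[OF assms(3) shift[of "1/2"]]
    by simp_all
  show "\<forall>\<^sub>F x in at_bot. q (x - 1/2) \<le> avg q x" "\<forall>\<^sub>F x in at_bot. avg q x \<le> q (x + 1/2)"
    using shift_le_avg[OF assms(1,2)] avg_le_shift[OF assms(1,2)] by simp_all
qed

section \<open>Increments of bounded monotone functions\<close>

lemma increment_window_integral_le:
  fixes q :: "real \<Rightarrow> real"
  assumes "mono q" and b: "\<And>y. \<bar>q y\<bar> \<le> B" and "c > 0" and "n \<ge> 0"
  shows "(LBINT x. (q (x + c) - q x) * indicator {-n..n} x) \<le> 2 * B * c"
proof -
  have q: "q \<in> borel_measurable borel"
    using assms(1) by (rule borel_measurable_mono)
  have B: "0 \<le> B"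
    using b[of 0] by linarith
  have window: "integrable lborel (\<lambda>x. indicator {a..a'} x * q (d + x))" for a a' d
    by (rule integrable_window[OF q b])
  note window0 = window[where d = 0, simplified]
  have shifted: "(LBINT x. indicator {-n..n} x * q (c + x)) = (LBINT y. indicator {-n+c..n+c} y * q y)"
  proof -
    have "(LBINT y. indicator {-n+c..n+c} y * q y)
        = (LBINT x. indicator {-n+c..n+c} (c + 1*x) * q (c + 1*x))"
      using lborel_integral_real_affine[of 1 "\<lambda>y. indicator {-n+c..n+c} y * q y" c] by simp
    also have "\<dots> = (LBINT x. indicator {-n..n} x * q (c + x))"
      by (rule Bochner_Integration.integral_cong) (auto simp: indicator_def)
    finally show ?thesis by simp
  qed
  have "(LBINT x. (q (x + c) - q x) * indicator {-n..n} x)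
      = (LBINT x. indicator {-n..n} x * q (c + x)) - (LBINT x. indicator {-n..n} x * q x)"
    by (subst Bochner_Integration.integral_diff[OF window window0, symmetric])
       (rule Bochner_Integration.integral_cong, auto simp: algebra_simps)
  also have "\<dots> = (LBINT y. (indicator {-n+c..n+c} y - indicator {-n..n} y) * q y)"
    unfolding shifted
    by (subst Bochner_Integration.integral_diff[OF window0 window0, symmetric])
       (rule Bochner_Integration.integral_cong, auto simp: algebra_simps)
  also have "\<dots> \<le> (LBINT y. B * indicator {n..n+c} y + B * indicator {-n..-n+c} y)"
  proof (rule integral_mono)
    show "integrable lborel (\<lambda>y. (indicator {-n+c..n+c} y - indicator {-n..n} y) * q y)"
      using Bochner_Integration.integrable_diff[OF window0 window0] by (simp add: algebra_simps)
    show "integrable lborel (\<lambda>y. B * indicator {n..n+c} y + B * indicator {-n..-n+c} y :: real)"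
      by (intro Bochner_Integration.integrable_add integrable_mult_right integrable_indicator_Icc)
    show "(indicator {-n+c..n+c} y - indicator {-n..n} y) * q y
        \<le> B * indicator {n..n+c} y + B * indicator {-n..-n+c} y" for y
      using b[of y] B \<open>c > 0\<close> \<open>n \<ge> 0\<close> by (auto simp: indicator_def abs_le_iff)
  qed
  also have "\<dots> = 2 * B * c"
    using \<open>c > 0\<close> by (simp add: integral_indicator_Icc)
  finally show ?thesis .
qed

lemma integrable_mono_increment:
  fixes q :: "real \<Rightarrow> real"
  assumes "mono q" and "\<And>y. \<bar>q y\<bar> \<le> B" and "c > 0"
  shows "integrable lborel (\<lambda>x. q (x + c) - q x)"
proof -
  have q: "q \<in> borel_measurable borel"
    using assms(1) by (rule borel_measurable_mono)
  define g where "g = (\<lambda>x. q (x + c) - q x)"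
  have g_nonneg: "g x \<ge> 0" for x
    unfolding g_def using assms(3) by (auto intro!: monoD[OF assms(1)])
  have g_meas: "g \<in> borel_measurable lborel"
    unfolding g_def using q by measurable
  define F where "F = (\<lambda>n x. g x * indicator {-real n..real n} x)"
  have F_int: "integrable lborel (F n)" for n
    unfolding F_def g_def
    using Bochner_Integration.integrable_diff[OF integrable_window[OF q assms(2), of "-real n" "real n" c]
        integrable_window[OF q assms(2), of "-real n" "real n" 0]]
    by (simp add: algebra_simps)
  have F_inc: "AE x in lborel. incseq (\<lambda>n. F n x)"
    by (intro AE_I2 incseq_SucI) (auto simp: F_def indicator_def intro: g_nonneg)
  have F_lim: "AE x in lborel. (\<lambda>n. F n x) \<longlonglongrightarrow> g x"
  proof (rule AE_I2)
    fix x
    obtain N :: nat where "\<bar>x\<bar> \<le> real N"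
      using real_arch_simple by blast
    then have "\<forall>n\<ge>N. F n x = g x"
      unfolding F_def by (auto simp: indicator_def abs_le_iff)
    then show "(\<lambda>n. F n x) \<longlonglongrightarrow> g x"
      by (intro tendsto_eventually) (auto simp: eventually_sequentially)
  qed
  have "incseq (\<lambda>n. LBINT x. F n x)"
    by (intro incseq_SucI integral_mono[OF F_int F_int]) (auto simp: F_def indicator_def intro: g_nonneg)
  moreover have "(LBINT x. F n x) \<le> 2 * B * c" for n
    unfolding F_def g_def by (rule increment_window_integral_le[OF assms]) simp
  ultimately obtain L where "(\<lambda>n. LBINT x. F n x) \<longlonglongrightarrow> L"
    using incseq_convergent by blast
  then have "integrable lborel g"
    by (rule integrable_monotone_convergence[OF F_int F_inc F_lim _ g_meas])
  then show ?thesis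
    unfolding g_def .
qed

lemma integrable_mono_oscillation:
  fixes q :: "real \<Rightarrow> real"
  assumes "mono q" and "\<And>y. \<bar>q y\<bar> \<le> B"
  shows "integrable lborel (\<lambda>x. q (x + 1/2) - q (x - 1/2))"
proof -
  have "integrable lborel (\<lambda>x. (\<lambda>y. q (y + 1) - q y) (-1/2 + 1 * x))"
    by (rule lborel_integrable_real_affine[OF integrable_mono_increment[OF assms]]) auto
  then show ?thesis
    by (simp add: algebra_simps)
qed

lemma abs_increment_le_oscillation:
  fixes q :: "real \<Rightarrow> real"
  assumes "mono q" and "\<bar>s\<bar> \<le> 1/2"
  shows "\<bar>q (x + s) - q x\<bar> \<le> q (x + 1/2) - q (x - 1/2)"
proof -
  have "q (x - 1/2) \<le> q (x + s)" "q (x + s) \<le> q (x + 1/2)"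
       "q (x - 1/2) \<le> q x" "q x \<le> q (x + 1/2)"
    using assms(2) by (auto intro!: monoD[OF assms(1)])
  then show ?thesis
    by linarith
qed

lemma integrable_diff_avg:
  fixes q :: "real \<Rightarrow> real"
  assumes "mono q" and "\<And>y. \<bar>q y\<bar> \<le> B"
  shows "integrable lborel (\<lambda>x. q x - avg q x)"
proof (rule Bochner_Integration.integrable_bound[OF integrable_mono_oscillation[OF assms]])
  have [measurable]: "q \<in> borel_measurable borel"
    using assms(1) by (rule borel_measurable_mono)
  then have [measurable]: "avg q \<in> borel_measurable borel"
    by (rule measurable_avg)
  show "(\<lambda>x. q x - avg q x) \<in> borel_measurable lborel"
    by measurable
  show "AE x in lborel. norm (q x - avg q x) \<le> norm (q (x + 1/2) - q (x - 1/2))"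
  proof (rule AE_I2)
    fix x
    have "q (x - 1/2) \<le> q x" "q x \<le> q (x + 1/2)"
      by (auto intro!: monoD[OF assms(1)])
    then show "norm (q x - avg q x) \<le> norm (q (x + 1/2) - q (x - 1/2))"
      using shift_le_avg[OF assms, of x] avg_le_shift[OF assms, of x] by simp
  qed
qed

section \<open>Symmetry of the averaging operator\<close>

lemma abs_shift_commutator_le:
  fixes h p :: "real \<Rightarrow> real"
  assumes mh: "mono h" and bh: "\<And>y. \<bar>h y\<bar> \<le> Bh"
    and mp: "mono p" and bp: "\<And>y. \<bar>p y\<bar> \<le> Bp"
    and s: "\<bar>s\<bar> \<le> 1/2"
  shows "\<bar>h (x + s) * p x - h x * p (x + s)\<bar>
    \<le> Bp * (h (x + 1/2) - h (x - 1/2)) + Bh * (p (x + 1/2) - p (x - 1/2))"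
proof -
  have "\<bar>h (x + s) * p x - h x * p (x + s)\<bar> = \<bar>(h (x + s) - h x) * p x + h x * (p x - p (x + s))\<bar>"
    by (simp add: algebra_simps)
  also have "\<dots> \<le> \<bar>h (x + s) - h x\<bar> * \<bar>p x\<bar> + \<bar>h x\<bar> * \<bar>p x - p (x + s)\<bar>"
    by (simp add: abs_mult[symmetric] abs_triangle_ineq)
  also have "\<dots> \<le> (h (x + 1/2) - h (x - 1/2)) * Bp + Bh * (p (x + 1/2) - p (x - 1/2))"
  proof (rule add_mono)
    show "\<bar>h (x + s) - h x\<bar> * \<bar>p x\<bar> \<le> (h (x + 1/2) - h (x - 1/2)) * Bp"
      by (rule mult_mono[OF abs_increment_le_oscillation[OF mh s] bp])
         (use monoD[OF mh, of "x - 1/2" "x + 1/2"] in auto)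
    show "\<bar>h x\<bar> * \<bar>p x - p (x + s)\<bar> \<le> Bh * (p (x + 1/2) - p (x - 1/2))"
      using mult_mono[OF bh abs_increment_le_oscillation[OF mp s]] bh[of 0]
      by (simp add: abs_minus_commute)
  qed
  finally show ?thesis
    by (simp add: mult.commute)
qed

lemma integrable_shift_commutator:
  fixes h p :: "real \<Rightarrow> real"
  assumes mh: "mono h" and bh: "\<And>y. \<bar>h y\<bar> \<le> Bh"
    and mp: "mono p" and bp: "\<And>y. \<bar>p y\<bar> \<le> Bp"
  shows "integrable (lborel \<Otimes>\<^sub>M lborel)
    (\<lambda>(x, s). indicator {-1/2..1/2::real} s * (h (x + s) * p x - h x * p (x + s)))"
proof -
  have [measurable]: "h \<in> borel_measurable borel" "p \<in> borel_measurable borel"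
    using mh mp by (auto intro: borel_measurable_mono)
  define G where "G = (\<lambda>x s. indicator {-1/2..1/2::real} s * (h (x + s) * p x - h x * p (x + s)))"
  define D where "D = (\<lambda>x. Bp * (h (x + 1/2) - h (x - 1/2)) + Bh * (p (x + 1/2) - p (x - 1/2)))"
  have G_meas: "(\<lambda>(x, s). G x s) \<in> borel_measurable (lborel \<Otimes>\<^sub>M lborel)"
    unfolding G_def by measurable
  have G_bound: "norm (G x s) \<le> D x * indicator {-1/2..1/2::real} s" for x s
    using abs_shift_commutator_le[OF mh bh mp bp, of s x] unfolding G_def D_def
    by (auto simp: indicator_def abs_mult)
  have G_int: "integrable lborel (G x)" for x
  proof (rule Bochner_Integration.integrable_bound)
    show "integrable lborel (\<lambda>s. D x * indicator {-1/2..1/2::real} s)"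
      by (intro integrable_mult_right integrable_indicator_Icc)
    show "G x \<in> borel_measurable lborel"
      unfolding G_def by measurable
    show "AE s in lborel. norm (G x s) \<le> norm (D x * indicator {-1/2..1/2::real} s)"
      by (intro AE_I2) (metis G_bound abs_ge_self order_trans real_norm_def)
  qed
  have "integrable (lborel \<Otimes>\<^sub>M lborel) (\<lambda>(x, s). G x s)"
  proof (rule lborel_pair.Fubini_integrable[OF G_meas])
    show "AE x in lborel. integrable lborel (\<lambda>s. case (x, s) of (x, s) \<Rightarrow> G x s)"
      using G_int by simp
    show "integrable lborel (\<lambda>x. LBINT s. norm (case (x, s) of (x, s) \<Rightarrow> G x s))"
    proof (rule Bochner_Integration.integrable_bound)
      show "integrable lborel D"
        unfolding D_def
        by (intro Bochner_Integration.integrable_add integrable_mult_right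
            integrable_mono_oscillation[OF mh bh] integrable_mono_oscillation[OF mp bp])
      have "(\<lambda>(x, s). norm (G x s)) \<in> borel_measurable (lborel \<Otimes>\<^sub>M lborel)"
        using G_meas by measurable
      then show "(\<lambda>x. LBINT s. norm (case (x, s) of (x, s) \<Rightarrow> G x s)) \<in> borel_measurable lborel"
        using lborel.borel_measurable_lebesgue_integral[of "\<lambda>x s. norm (G x s)"] by simp
      show "AE x in lborel. norm (LBINT s. norm (case (x, s) of (x, s) \<Rightarrow> G x s)) \<le> norm (D x)"
      proof (rule AE_I2)
        fix x
        have "(LBINT s. norm (G x s)) \<le> (LBINT s. D x * indicator {-1/2..1/2::real} s)"
          by (rule integral_mono[OF integrable_norm[OF G_int] integrable_mult_right[OF integrable_indicator_Icc]])
             (use G_bound in simp)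
        then show "norm (LBINT s. norm (case (x, s) of (x, s) \<Rightarrow> G x s)) \<le> norm (D x)"
          by (simp add: integral_indicator_Icc)
      qed
    qed
  qed
  then show ?thesis
    unfolding G_def .
qed

lemma integral_symmetric_interval_odd:
  fixes k :: "real \<Rightarrow> real"
  assumes "\<And>s. k (-s) = - k s"
  shows "(LBINT s. indicator {-a..a} s * k s) = 0"
proof -
  define I where "I = (LBINT s. indicator {-a..a} s * k s)"
  have "I = (LBINT s. (\<lambda>s. indicator {-a..a} s * k s) (0 + (-1) * s))"
    unfolding I_def using lborel_integral_real_affine[of "-1" "\<lambda>s. indicator {-a..a} s * k s" 0] by simp
  also have "\<dots> = (LBINT s. - (indicator {-a..a} s * k s))"
    by (rule Bochner_Integration.integral_cong) (auto simp: assms indicator_def)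
  also have "\<dots> = - I"
    unfolding I_def by simp
  finally show ?thesis
    unfolding I_def by simp
qed

lemma avg_commutator_has_integral_0:
  fixes h p :: "real \<Rightarrow> real"
  assumes mh: "mono h" and bh: "\<And>y. \<bar>h y\<bar> \<le> Bh"
    and mp: "mono p" and bp: "\<And>y. \<bar>p y\<bar> \<le> Bp"
  shows "has_bochner_integral lborel (\<lambda>x. avg h x * p x - h x * avg p x) 0"
proof -
  have [measurable]: "h \<in> borel_measurable borel" "p \<in> borel_measurable borel"
    using mh mp by (auto intro: borel_measurable_mono)
  define G where "G = (\<lambda>x s. indicator {-1/2..1/2::real} s * (h (x + s) * p x - h x * p (x + s)))"
  have G_int: "integrable (lborel \<Otimes>\<^sub>M lborel) (\<lambda>(x, s). G x s)"
    unfolding G_def by (rule integrable_shift_commutator[OF mh bh mp bp])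
  have inner: "(LBINT s. G x s) = avg h x * p x - h x * avg p x" for x
  proof -
    have "(LBINT s. G x s) = (LBINT s. p x * (indicator {-1/2..1/2::real} s * h (x + s))
        - h x * (indicator {-1/2..1/2::real} s * p (x + s)))"
      unfolding G_def by (rule Bochner_Integration.integral_cong) (auto simp: algebra_simps)
    also have "\<dots> = p x * avg h x - h x * avg p x"
      by (subst Bochner_Integration.integral_diff)
         (auto simp: avg_eq_window_integral intro!: integrable_mult_right integrable_window bh bp)
    finally show ?thesis
      by simp
  qed
  txt \<open>Integrating first in \<open>x\<close>, the substitution \<open>x \<mapsto> x + s\<close> shows the inner integral is odd in \<open>s\<close>.\<close>
  define k where "k = (\<lambda>s. LBINT x. h (x + s) * p x - h x * p (x + s))"
  have k_odd: "k (-s) = - k s" for s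
  proof -
    have "k (-s) = (LBINT x. (\<lambda>x. h (x + - s) * p x - h x * p (x + - s)) (s + 1 * x))"
      unfolding k_def
      using lborel_integral_real_affine[of 1 "\<lambda>x. h (x + - s) * p x - h x * p (x + - s)" s] by simp
    also have "\<dots> = (LBINT x. - (h (x + s) * p x - h x * p (x + s)))"
      by (rule Bochner_Integration.integral_cong) (auto simp: algebra_simps)
    also have "\<dots> = - k s"
      unfolding k_def by (rule Bochner_Integration.integral_minus)
    finally show ?thesis .
  qed
  have "(LBINT s. LBINT x. G x s) = (LBINT s. indicator {-1/2..1/2::real} s * k s)"
    unfolding G_def k_def by simp
  also have "\<dots> = 0"
    using integral_symmetric_interval_odd[of k "1/2", OF k_odd] by simp
  finally have "(LBINT x. LBINT s. G x s) = 0"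
    using lborel_pair.Fubini_integral[OF G_int] by simp
  moreover have "integrable lborel (\<lambda>x. LBINT s. G x s)"
    using lborel_pair.integrable_fst'[OF G_int] by simp
  ultimately show ?thesis
    by (simp add: inner has_bochner_integral_iff)
qed

section \<open>Monotone profiles\<close>

definition profile :: "(real \<Rightarrow> real) \<Rightarrow> bool" where
  "profile q \<longleftrightarrow> mono q \<and> (q \<longlongrightarrow> -1) at_bot \<and> (q \<longlongrightarrow> 1) at_top \<and>
     integrable lborel (\<lambda>x. (Wsh x - q x)\<^sup>2)"

lemma profile_abs_le:
  assumes "profile q"
  shows "\<bar>q x\<bar> \<le> 1"
proof -
  have m: "mono q" and bot: "(q \<longlongrightarrow> -1) at_bot" and top: "(q \<longlongrightarrow> 1) at_top"
    using assms unfolding profile_def by auto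
  have "q x \<le> 1"
  proof (rule tendsto_lowerbound[OF top])
    show "\<forall>\<^sub>F y in at_top. q x \<le> q y"
      unfolding eventually_at_top_linorder by (auto intro!: exI[of _ x] monoD[OF m])
  qed simp
  moreover have "-1 \<le> q x"
  proof (rule tendsto_upperbound[OF bot])
    show "\<forall>\<^sub>F y in at_bot. q y \<le> q x"
      unfolding eventually_at_bot_linorder by (auto intro!: exI[of _ x] monoD[OF m])
  qed simp
  ultimately show ?thesis
    by linarith
qed

lemma profile_measurable: "profile q \<Longrightarrow> q \<in> borel_measurable borel"
  unfolding profile_def using borel_measurable_mono by blast

lemma mono_Wsh: "mono Wsh"
  unfolding Wsh_def mono_def by (auto simp: sgn_real_def)

lemma abs_Wsh_le: "\<bar>Wsh x\<bar> \<le> 1"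
  unfolding Wsh_def by (auto simp: sgn_real_def)

lemma measurable_Wsh [measurable]: "Wsh \<in> borel_measurable borel"
  using mono_Wsh by (rule borel_measurable_mono)

lemma measurable_avg_Wsh [measurable]: "avg Wsh \<in> borel_measurable borel"
  by (rule measurable_avg[OF measurable_Wsh])

lemma avg_Wsh_eq_Wsh:
  assumes "1/2 < \<bar>x\<bar>"
  shows "avg Wsh x = Wsh x"
proof -
  have "\<bar>avg Wsh x\<bar> \<le> 1"
    by (rule abs_avg_le[OF measurable_Wsh abs_Wsh_le])
  moreover have "Wsh (x - 1/2) \<le> avg Wsh x" "avg Wsh x \<le> Wsh (x + 1/2)"
    by (rule shift_le_avg[OF mono_Wsh abs_Wsh_le] avg_le_shift[OF mono_Wsh abs_Wsh_le])+
  moreover have "1/2 < x \<or> x < -1/2"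
    using assms by linarith
  ultimately show ?thesis
    by (auto simp: Wsh_def)
qed

lemma profile_Wsh: "profile Wsh"
proof -
  have "(Wsh \<longlongrightarrow> -1) at_bot"
    by (rule tendsto_eventually) (auto simp: Wsh_def eventually_at_bot_dense intro!: exI[of _ 0])
  moreover have "(Wsh \<longlongrightarrow> 1) at_top"
    by (rule tendsto_eventually) (auto simp: Wsh_def eventually_at_top_dense intro!: exI[of _ 0])
  ultimately show ?thesis
    unfolding profile_def using mono_Wsh by simp
qed

lemma integrable_shift:
  fixes g :: "real \<Rightarrow> real"
  assumes "integrable lborel g"
  shows "integrable lborel (\<lambda>x. g (x + c))"
  using lborel_integrable_real_affine[OF assms, of 1 c] by (simp add: add.commute)

lemma integrable_square_lincomb:
  fixes a b :: "real \<Rightarrow> real"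
  assumes "integrable lborel (\<lambda>x. (a x)\<^sup>2)" and "integrable lborel (\<lambda>x. (b x)\<^sup>2)"
    and [measurable]: "a \<in> borel_measurable borel" "b \<in> borel_measurable borel"
  shows "integrable lborel (\<lambda>x. (c1 * a x + c2 * b x)\<^sup>2)"
proof (rule Bochner_Integration.integrable_bound)
  show "integrable lborel (\<lambda>x. 2 * c1\<^sup>2 * (a x)\<^sup>2 + 2 * c2\<^sup>2 * (b x)\<^sup>2)"
    using assms(1,2) by (intro Bochner_Integration.integrable_add integrable_mult_right)
  show "(\<lambda>x. (c1 * a x + c2 * b x)\<^sup>2) \<in> borel_measurable lborel"
    by measurable
  show "AE x in lborel. norm ((c1 * a x + c2 * b x)\<^sup>2) \<le> norm (2 * c1\<^sup>2 * (a x)\<^sup>2 + 2 * c2\<^sup>2 * (b x)\<^sup>2)"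
  proof (rule AE_I2)
    fix x
    have "0 \<le> (c1 * a x - c2 * b x)\<^sup>2"
      by simp
    then have "(c1 * a x + c2 * b x)\<^sup>2 \<le> 2 * c1\<^sup>2 * (a x)\<^sup>2 + 2 * c2\<^sup>2 * (b x)\<^sup>2"
      by (simp add: power2_eq_square algebra_simps)
    moreover have "0 \<le> 2 * c1\<^sup>2 * (a x)\<^sup>2 + 2 * c2\<^sup>2 * (b x)\<^sup>2"
      by simp
    ultimately show "norm ((c1 * a x + c2 * b x)\<^sup>2) \<le> norm (2 * c1\<^sup>2 * (a x)\<^sup>2 + 2 * c2\<^sup>2 * (b x)\<^sup>2)"
      by simp
  qed
qed

lemma integrable_sq_diff_profiles:
  assumes f: "profile f" and g: "profile g"
  shows "integrable lborel (\<lambda>x. (f x - g x)\<^sup>2)"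
proof -
  have [measurable]: "f \<in> borel_measurable borel" "g \<in> borel_measurable borel"
    using f g by (simp_all add: profile_measurable)
  have "integrable lborel (\<lambda>x. (1 * (f x - Wsh x) + 1 * (Wsh x - g x))\<^sup>2)"
  proof (rule integrable_square_lincomb)
    show "integrable lborel (\<lambda>x. (f x - Wsh x)\<^sup>2)" "integrable lborel (\<lambda>x. (Wsh x - g x)\<^sup>2)"
      using f g unfolding profile_def by (simp_all add: power2_commute)
  qed measurable
  moreover have "(\<lambda>x. (1 * (f x - Wsh x) + 1 * (Wsh x - g x))\<^sup>2) = (\<lambda>x. (f x - g x)\<^sup>2)"
    by (simp add: algebra_simps)
  ultimately show ?thesis
    by simp
qed

lemma profile_convex_comb:
  assumes f: "profile f" and g: "profile g" and "0 \<le> t" "t \<le> 1"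
  shows "profile (\<lambda>x. f x + t * (g x - f x))"
proof -
  have mf: "mono f" and mg: "mono g"
    and bot: "(f \<longlongrightarrow> -1) at_bot" "(g \<longlongrightarrow> -1) at_bot"
    and top: "(f \<longlongrightarrow> 1) at_top" "(g \<longlongrightarrow> 1) at_top"
    using f g unfolding profile_def by auto
  have [measurable]: "f \<in> borel_measurable borel" "g \<in> borel_measurable borel"
    using f g by (simp_all add: profile_measurable)
  have "mono (\<lambda>x. f x + t * (g x - f x))"
  proof (rule monoI)
    fix x y :: real
    assume "x \<le> y"
    then have "(1 - t) * f x \<le> (1 - t) * f y" "t * g x \<le> t * g y"
      using \<open>0 \<le> t\<close> \<open>t \<le> 1\<close> by (auto intro!: mult_left_mono monoD[OF mf] monoD[OF mg])
    then show "f x + t * (g x - f x) \<le> f y + t * (g y - f y)"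
      by (simp add: algebra_simps)
  qed
  moreover have "((\<lambda>x. f x + t * (g x - f x)) \<longlongrightarrow> -1 + t * (-1 - -1)) at_bot"
    "((\<lambda>x. f x + t * (g x - f x)) \<longlongrightarrow> 1 + t * (1 - 1)) at_top"
    by (intro tendsto_intros bot top)+
  moreover have "integrable lborel (\<lambda>x. ((1 - t) * (Wsh x - f x) + t * (Wsh x - g x))\<^sup>2)"
  proof (rule integrable_square_lincomb)
    show "integrable lborel (\<lambda>x. (Wsh x - f x)\<^sup>2)" "integrable lborel (\<lambda>x. (Wsh x - g x)\<^sup>2)"
      using f g unfolding profile_def by auto
  qed measurable
  then have "integrable lborel (\<lambda>x. (Wsh x - (f x + t * (g x - f x)))\<^sup>2)"
    by (simp add: algebra_simps)
  ultimately show ?thesis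
    unfolding profile_def by simp
qed

lemma sq_dist_avg_Wsh_le:
  fixes q :: "real \<Rightarrow> real"
  assumes m: "mono q" and b: "\<And>y. \<bar>q y\<bar> \<le> 1"
  shows "(Wsh x - avg q x)\<^sup>2
    \<le> (Wsh (x - 1/2) - q (x - 1/2))\<^sup>2 + (Wsh (x + 1/2) - q (x + 1/2))\<^sup>2 + 4 * indicator {-1/2..1/2::real} x"
proof -
  have abs_avg: "\<bar>avg q x\<bar> \<le> 1"
    by (rule abs_avg_le[OF borel_measurable_mono[OF m] b])
  have nonneg: "0 \<le> (Wsh (x - 1/2) - q (x - 1/2))\<^sup>2" "0 \<le> (Wsh (x + 1/2) - q (x + 1/2))\<^sup>2"
    by simp_all
  consider "1/2 < x" | "x < -1/2" | "x \<in> {-1/2..1/2}"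
    by fastforce
  then show ?thesis
  proof cases
    case 1
    then have "Wsh x = 1" "Wsh (x - 1/2) = 1"
      by (simp_all add: Wsh_def)
    then have "\<bar>Wsh x - avg q x\<bar> \<le> \<bar>Wsh (x - 1/2) - q (x - 1/2)\<bar>"
      using shift_le_avg[OF m b, of x] abs_avg by linarith
    then have "(Wsh x - avg q x)\<^sup>2 \<le> (Wsh (x - 1/2) - q (x - 1/2))\<^sup>2"
      by (simp only: abs_le_square_iff)
    moreover have "indicator {-1/2..1/2::real} x = (0::real)"
      using 1 by simp
    ultimately show ?thesis
      using nonneg by linarith
  next
    case 2
    then have "Wsh x = -1" "Wsh (x + 1/2) = -1"
      by (simp_all add: Wsh_def)
    then have "\<bar>Wsh x - avg q x\<bar> \<le> \<bar>Wsh (x + 1/2) - q (x + 1/2)\<bar>"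
      using avg_le_shift[OF m b, of x] abs_avg by linarith
    then have "(Wsh x - avg q x)\<^sup>2 \<le> (Wsh (x + 1/2) - q (x + 1/2))\<^sup>2"
      by (simp only: abs_le_square_iff)
    moreover have "indicator {-1/2..1/2::real} x = (0::real)"
      using 2 by simp
    ultimately show ?thesis
      using nonneg by linarith
  next
    case 3
    have "\<bar>Wsh x - avg q x\<bar> \<le> 2"
      using abs_Wsh_le[of x] abs_avg by linarith
    then have "\<bar>Wsh x - avg q x\<bar>\<^sup>2 \<le> 2\<^sup>2"
      by (rule power_mono) simp
    then have "(Wsh x - avg q x)\<^sup>2 \<le> 4"
      by simp
    moreover have "indicator {-1/2..1/2::real} x = (1::real)"
      using 3 by simp
    ultimately show ?thesis
      using nonneg by linarith
  qed
qed

lemma profile_avg: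
  assumes "profile q"
  shows "profile (avg q)"
proof -
  have m: "mono q" and b: "\<And>y. \<bar>q y\<bar> \<le> 1"
    and g: "integrable lborel (\<lambda>x. (Wsh x - q x)\<^sup>2)"
    and bot: "(q \<longlongrightarrow> -1) at_bot" and top: "(q \<longlongrightarrow> 1) at_top"
    using assms profile_abs_le unfolding profile_def by auto
  have [measurable]: "avg q \<in> borel_measurable borel"
    by (rule measurable_avg[OF borel_measurable_mono[OF m]])
  have "integrable lborel (\<lambda>x. (Wsh (x - 1/2) - q (x - 1/2))\<^sup>2 + (Wsh (x + 1/2) - q (x + 1/2))\<^sup>2
      + 4 * indicator {-1/2..1/2::real} x)"
    by (intro Bochner_Integration.integrable_add integrable_mult_right integrable_indicator_Icc)
       (use integrable_shift[OF g, of "-1/2"] integrable_shift[OF g, of "1/2"] in simp_all)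
  then have "integrable lborel (\<lambda>x. (Wsh x - avg q x)\<^sup>2)"
  proof (rule Bochner_Integration.integrable_bound)
    show "(\<lambda>x. (Wsh x - avg q x)\<^sup>2) \<in> borel_measurable lborel"
      by measurable
    show "AE x in lborel. norm ((Wsh x - avg q x)\<^sup>2) \<le> norm ((Wsh (x - 1/2) - q (x - 1/2))\<^sup>2
        + (Wsh (x + 1/2) - q (x + 1/2))\<^sup>2 + 4 * indicator {-1/2..1/2::real} x)"
      using order_trans[OF sq_dist_avg_Wsh_le[OF m b] abs_ge_self] by (intro AE_I2) simp
  qed
  then show ?thesis
    unfolding profile_def
    using mono_avg[OF m b] tendsto_avg_at_bot[OF m b bot] tendsto_avg_at_top[OF m b top] by simp
qed

lemma integrable_sq_avg_diff_Wsh: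
  assumes "profile q"
  shows "integrable lborel (\<lambda>x. (avg q x - avg Wsh x)\<^sup>2)"
  by (rule integrable_sq_diff_profiles[OF profile_avg[OF assms] profile_avg[OF profile_Wsh]])

lemma profile_in_Ccone: "profile q \<Longrightarrow> q \<in> Ccone"
  unfolding Ccone_def Hspace_def profile_def
  using borel_measurable_mono by (auto simp: measurable_lborel1)

lemma Ccone_AE_profile:
  assumes "W \<in> Ccone"
  obtains f where "profile f" and "AE x in lborel. W x = f x"
proof -
  obtain f where W: "W \<in> borel_measurable lborel" "integrable lborel (\<lambda>x. (Wsh x - W x)\<^sup>2)"
    and f: "mono f" "(f \<longlongrightarrow> -1) at_bot" "(f \<longlongrightarrow> 1) at_top"
    and Wf: "AE x in lborel. W x = f x"
    using assms unfolding Ccone_def Hspace_def by blast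
  have [measurable]: "W \<in> borel_measurable borel" "f \<in> borel_measurable borel"
    using W(1) borel_measurable_mono[OF f(1)] by simp_all
  have "integrable lborel (\<lambda>x. (Wsh x - W x)\<^sup>2) \<longleftrightarrow> integrable lborel (\<lambda>x. (Wsh x - f x)\<^sup>2)"
  proof (rule integrable_cong_AE)
    show "AE x in lborel. (Wsh x - W x)\<^sup>2 = (Wsh x - f x)\<^sup>2"
      using Wf by eventually_elim simp
  qed measurable
  then have "profile f"
    unfolding profile_def using f W(2) by simp
  then show ?thesis
    using Wf that by blast
qed

lemma L2norm_cong_AE:
  assumes "AE x in lborel. f x = g x"
    and [measurable]: "f \<in> borel_measurable borel" "g \<in> borel_measurable borel"
  shows "L2norm f = L2norm g"
proof -
  have "integral\<^sup>L lborel (\<lambda>x. (f x)\<^sup>2) = integral\<^sup>L lborel (\<lambda>x. (g x)\<^sup>2)"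
  proof (rule integral_cong_AE)
    show "AE x in lborel. (f x)\<^sup>2 = (g x)\<^sup>2"
      using assms(1) by eventually_elim simp
  qed measurable
  then show ?thesis
    unfolding L2norm_def by simp
qed

lemma Lfun_cong_AE:
  assumes "AE x in lborel. W x = f x"
    and [measurable]: "W \<in> borel_measurable borel" "f \<in> borel_measurable borel"
      "Phi \<in> borel_measurable borel"
  shows "Lfun Phi W = Lfun Phi f"
proof -
  have [measurable]: "avg f \<in> borel_measurable borel"
    by (rule measurable_avg[OF assms(3)])
  show ?thesis
    unfolding Lfun_def avg_cong_AE[OF assms(1-3)]
  proof (rule integral_cong_AE)
    show "AE x in lborel. 1/2 * (W x)\<^sup>2 - Phi (avg f x) - (1/2 * (Wsh x)\<^sup>2 - Phi (avg Wsh x))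
        = 1/2 * (f x)\<^sup>2 - Phi (avg f x) - (1/2 * (Wsh x)\<^sup>2 - Phi (avg Wsh x))"
      using assms(1) by eventually_elim simp
  qed measurable
qed

section \<open>The energy near a profile\<close>

definition energy_density :: "(real \<Rightarrow> real) \<Rightarrow> (real \<Rightarrow> real) \<Rightarrow> real \<Rightarrow> real" where
  "energy_density Phi q x = (1/2 * (q x)\<^sup>2 - Phi (avg q x)) - (1/2 * (Wsh x)\<^sup>2 - Phi (avg Wsh x))"

lemma Lfun_eq_integral_energy_density: "Lfun Phi q = (LBINT x. energy_density Phi q x)"
  unfolding Lfun_def energy_density_def ..

lemma nonpos_if_le_small_multiples:
  fixes N C \<epsilon> :: real
  assumes "0 < \<epsilon>" and "\<And>t. 0 < t \<Longrightarrow> t < \<epsilon> \<Longrightarrow> N \<le> t * C"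
  shows "N \<le> 0"
proof (rule tendsto_le[of "at_right 0" "\<lambda>t. t * C" 0 "\<lambda>_. N" N])
  show "((\<lambda>t. t * C) \<longlongrightarrow> 0) (at_right 0)"
    by (auto intro!: tendsto_eq_intros)
  show "\<forall>\<^sub>F t in at_right 0. N \<le> t * C"
    unfolding eventually_at_right_field using assms by blast
qed simp_all

locale front_potential =
  fixes Phi dPhi :: "real \<Rightarrow> real" and M :: real
  assumes lipschitz_dPhi:
      "\<And>x y. x \<in> {-1..1} \<Longrightarrow> y \<in> {-1..1} \<Longrightarrow> \<bar>dPhi x - dPhi y\<bar> \<le> M * \<bar>x - y\<bar>"
    and taylor_Phi:
      "\<And>x y. x \<in> {-1..1} \<Longrightarrow> y \<in> {-1..1} \<Longrightarrow> \<bar>Phi y - Phi x - dPhi x * (y - x)\<bar> \<le> M * (y - x)\<^sup>2"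
    and mono_dPhi: "\<And>x y. x \<in> {-1..1} \<Longrightarrow> y \<in> {-1..1} \<Longrightarrow> x \<le> y \<Longrightarrow> dPhi x \<le> dPhi y"
    and dPhi_minus_one: "dPhi (-1) = -1" and dPhi_one: "dPhi 1 = 1"
    and continuous_Phi: "continuous_on UNIV Phi" and continuous_dPhi: "continuous_on UNIV dPhi"
begin

lemma M_nonneg: "0 \<le> M"
  using lipschitz_dPhi[of 1 "-1"] dPhi_one dPhi_minus_one by simp

lemma measurable_Phi [measurable]: "Phi \<in> borel_measurable borel"
  using continuous_Phi by (rule borel_measurable_continuous_onI)

lemma measurable_dPhi [measurable]: "dPhi \<in> borel_measurable borel"
  using continuous_dPhi by (rule borel_measurable_continuous_onI)

lemma abs_dPhi_le:
  assumes "\<bar>y\<bar> \<le> 1"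
  shows "\<bar>dPhi y\<bar> \<le> 1"
proof -
  have "y \<in> {-1..1}"
    using assms by (simp add: abs_le_iff)
  then have "dPhi (-1) \<le> dPhi y" "dPhi y \<le> dPhi 1"
    by (simp_all add: mono_dPhi)
  then show ?thesis
    using dPhi_minus_one dPhi_one by linarith
qed

lemma dPhi_avg_Wsh:
  assumes "1/2 < \<bar>x\<bar>"
  shows "dPhi (avg Wsh x) = Wsh x"
proof -
  have "Wsh x = 1 \<or> Wsh x = -1"
    using assms by (auto simp: Wsh_def sgn_real_def)
  then show ?thesis
    using avg_Wsh_eq_Wsh[OF assms] dPhi_minus_one dPhi_one by auto
qed

lemma sq_dist_dPhi_le:
  assumes "\<bar>a\<bar> \<le> 1"
  shows "(Wsh x - dPhi a)\<^sup>2 \<le> M\<^sup>2 * (a - avg Wsh x)\<^sup>2 + 4 * indicator {-1/2..1/2::real} x"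
proof (cases "x \<in> {-1/2..1/2}")
  case True
  have "\<bar>Wsh x - dPhi a\<bar> \<le> 2"
    using abs_Wsh_le[of x] abs_dPhi_le[OF assms] by linarith
  then have "\<bar>Wsh x - dPhi a\<bar>\<^sup>2 \<le> 2\<^sup>2"
    by (rule power_mono) simp
  then have "(Wsh x - dPhi a)\<^sup>2 \<le> 4"
    by simp
  moreover have "0 \<le> M\<^sup>2 * (a - avg Wsh x)\<^sup>2" "indicator {-1/2..1/2::real} x = (1::real)"
    using True by simp_all
  ultimately show ?thesis
    by linarith
next
  case False
  then have "1/2 < \<bar>x\<bar>"
    by auto
  have "avg Wsh x \<in> {-1..1}" "a \<in> {-1..1}"
    using assms abs_avg_le[OF measurable_Wsh abs_Wsh_le, of x] by (auto simp: abs_le_iff)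
  from lipschitz_dPhi[OF this]
  have "\<bar>Wsh x - dPhi a\<bar> \<le> \<bar>M * (a - avg Wsh x)\<bar>"
    using dPhi_avg_Wsh[OF \<open>1/2 < \<bar>x\<bar>\<close>] M_nonneg by (simp add: abs_mult abs_minus_commute)
  then have "(Wsh x - dPhi a)\<^sup>2 \<le> (M * (a - avg Wsh x))\<^sup>2"
    by (simp only: abs_le_square_iff)
  then show ?thesis
    using False by (simp add: power_mult_distrib)
qed

lemma profile_dPhi_avg:
  assumes "profile q"
  shows "profile (\<lambda>x. dPhi (avg q x))"
proof -
  have m: "mono q" and b: "\<And>y. \<bar>q y\<bar> \<le> 1"
    and bot: "(q \<longlongrightarrow> -1) at_bot" and top: "(q \<longlongrightarrow> 1) at_top"
    using assms profile_abs_le unfolding profile_def by auto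
  have [measurable]: "avg q \<in> borel_measurable borel"
    by (rule measurable_avg[OF borel_measurable_mono[OF m]])
  have abs_avg: "\<bar>avg q x\<bar> \<le> 1" for x
    by (rule abs_avg_le[OF borel_measurable_mono[OF m] b])
  have mono: "mono (\<lambda>x. dPhi (avg q x))"
  proof (rule monoI)
    fix x y :: real
    assume "x \<le> y"
    then have "avg q x \<le> avg q y"
      using mono_avg[OF m b] by (auto dest: monoD)
    then show "dPhi (avg q x) \<le> dPhi (avg q y)"
      using abs_avg[of x] abs_avg[of y] by (intro mono_dPhi) (auto simp: abs_le_iff)
  qed
  have cont: "isCont dPhi y" for y
    using continuous_dPhi by (simp add: continuous_on_eq_continuous_at)
  have lim: "((\<lambda>x. dPhi (avg q x)) \<longlongrightarrow> dPhi (-1)) at_bot" "((\<lambda>x. dPhi (avg q x)) \<longlongrightarrow> dPhi 1) at_top"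
    by (rule isCont_tendsto_compose[OF cont tendsto_avg_at_bot[OF m b bot]]
        isCont_tendsto_compose[OF cont tendsto_avg_at_top[OF m b top]])+
  have "integrable lborel (\<lambda>x. M\<^sup>2 * (avg q x - avg Wsh x)\<^sup>2 + 4 * indicator {-1/2..1/2::real} x)"
    by (intro Bochner_Integration.integrable_add integrable_mult_right integrable_indicator_Icc
        integrable_sq_avg_diff_Wsh assms)
  then have "integrable lborel (\<lambda>x. (Wsh x - dPhi (avg q x))\<^sup>2)"
  proof (rule Bochner_Integration.integrable_bound)
    show "(\<lambda>x. (Wsh x - dPhi (avg q x))\<^sup>2) \<in> borel_measurable lborel"
      by measurable
    show "AE x in lborel. norm ((Wsh x - dPhi (avg q x))\<^sup>2)
        \<le> norm (M\<^sup>2 * (avg q x - avg Wsh x)\<^sup>2 + 4 * indicator {-1/2..1/2::real} x)"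
      using order_trans[OF sq_dist_dPhi_le[OF abs_avg] abs_ge_self] by (intro AE_I2) simp
  qed
  then show ?thesis
    unfolding profile_def using mono lim dPhi_minus_one dPhi_one by simp
qed

lemma profile_Top: "profile f \<Longrightarrow> profile (Top dPhi f)"
  unfolding Top_def by (intro profile_avg profile_dPhi_avg)

lemma abs_shock_correction_le:
  assumes "\<bar>a\<bar> \<le> 1"
  shows "\<bar>(Wsh x - dPhi (avg Wsh x)) * (a - avg Wsh x) + Wsh x * (avg Wsh x - Wsh x)\<bar>
    \<le> 6 * indicator {-1/2..1/2::real} x"
proof (cases "x \<in> {-1/2..1/2}")
  case True
  have abs_avg_Wsh: "\<bar>avg Wsh x\<bar> \<le> 1"
    by (rule abs_avg_le[OF measurable_Wsh abs_Wsh_le])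
  have "\<bar>Wsh x - dPhi (avg Wsh x)\<bar> \<le> 2" "\<bar>a - avg Wsh x\<bar> \<le> 2"
    using abs_Wsh_le[of x] abs_dPhi_le[OF abs_avg_Wsh] assms abs_avg_Wsh by linarith+
  then have "\<bar>(Wsh x - dPhi (avg Wsh x)) * (a - avg Wsh x)\<bar> \<le> 2 * 2"
    unfolding abs_mult by (rule mult_mono) auto
  moreover have "\<bar>Wsh x * (avg Wsh x - Wsh x)\<bar> \<le> 1 * 2"
    unfolding abs_mult
    by (rule mult_mono[OF abs_Wsh_le]) (use abs_avg_Wsh abs_Wsh_le[of x] in auto)
  ultimately have "\<bar>(Wsh x - dPhi (avg Wsh x)) * (a - avg Wsh x) + Wsh x * (avg Wsh x - Wsh x)\<bar> \<le> 6"
    by (smt (verit) abs_triangle_ineq)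
  then show ?thesis
    using True by simp
next
  case False
  then have "1/2 < \<bar>x\<bar>"
    by auto
  then have "avg Wsh x = Wsh x" "dPhi (avg Wsh x) = Wsh x"
    by (rule avg_Wsh_eq_Wsh dPhi_avg_Wsh)+
  then show ?thesis
    using False by simp
qed

lemma taylor_remainder_integral_bound:
  fixes a c :: "real \<Rightarrow> real"
  assumes [measurable]: "a \<in> borel_measurable borel" "c \<in> borel_measurable borel"
    and int: "integrable lborel (\<lambda>x. (c x - a x)\<^sup>2)"
    and range: "\<And>x. a x \<in> {-1..1}" "\<And>x. c x \<in> {-1..1}"
  shows "integrable lborel (\<lambda>x. Phi (c x) - Phi (a x) - dPhi (a x) * (c x - a x))"
    and "- (M * (LBINT x. (c x - a x)\<^sup>2)) \<le> (LBINT x. Phi (c x) - Phi (a x) - dPhi (a x) * (c x - a x))"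
proof -
  have bound: "\<bar>Phi (c x) - Phi (a x) - dPhi (a x) * (c x - a x)\<bar> \<le> M * (c x - a x)\<^sup>2" for x
    by (rule taylor_Phi[OF range(1)[of x] range(2)[of x]])
  show int_R: "integrable lborel (\<lambda>x. Phi (c x) - Phi (a x) - dPhi (a x) * (c x - a x))"
  proof (rule Bochner_Integration.integrable_bound[OF integrable_mult_right[OF int, of M]])
    show "(\<lambda>x. Phi (c x) - Phi (a x) - dPhi (a x) * (c x - a x)) \<in> borel_measurable lborel"
      by measurable
    show "AE x in lborel. norm (Phi (c x) - Phi (a x) - dPhi (a x) * (c x - a x)) \<le> norm (M * (c x - a x)\<^sup>2)"
      using bound M_nonneg by (intro AE_I2) (simp add: abs_mult)
  qed
  have "(LBINT x. - (M * (c x - a x)\<^sup>2)) \<le> (LBINT x. Phi (c x) - Phi (a x) - dPhi (a x) * (c x - a x))"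
    by (rule integral_mono[OF integrable_minus[OF integrable_mult_right[OF int]] int_R])
       (use bound in \<open>metis abs_le_iff minus_le_iff\<close>)
  then show "- (M * (LBINT x. (c x - a x)\<^sup>2)) \<le> (LBINT x. Phi (c x) - Phi (a x) - dPhi (a x) * (c x - a x))"
    by simp
qed

lemma integrable_energy_density:
  assumes "profile f"
  shows "integrable lborel (energy_density Phi f)"
proof -
  have m: "mono f" and b: "\<And>y. \<bar>f y\<bar> \<le> 1" and g: "integrable lborel (\<lambda>x. (Wsh x - f x)\<^sup>2)"
    using assms profile_abs_le unfolding profile_def by auto
  have [measurable]: "f \<in> borel_measurable borel"
    using m by (rule borel_measurable_mono)
  then have avg_f [measurable]: "avg f \<in> borel_measurable borel"
    by (rule measurable_avg)
  have abs_avg: "\<bar>avg f x\<bar> \<le> 1" "\<bar>avg Wsh x\<bar> \<le> 1" for x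
    by (rule abs_avg_le[OF borel_measurable_mono[OF m] b] abs_avg_le[OF measurable_Wsh abs_Wsh_le])+
  define T1 where "T1 = (\<lambda>x. 1/2 * (Wsh x - f x)\<^sup>2)"
  define T2 where "T2 = (\<lambda>x. Wsh x * (f x - avg f x))"
  define T3 where "T3 = (\<lambda>x. (Wsh x - dPhi (avg Wsh x)) * (avg f x - avg Wsh x) + Wsh x * (avg Wsh x - Wsh x))"
  define T4 where "T4 = (\<lambda>x. Phi (avg f x) - Phi (avg Wsh x) - dPhi (avg Wsh x) * (avg f x - avg Wsh x))"
  have split: "energy_density Phi f = (\<lambda>x. T1 x + T2 x + T3 x - T4 x)"
    unfolding energy_density_def T1_def T2_def T3_def T4_def
    by (rule ext) (simp add: power2_eq_square algebra_simps)
  have "integrable lborel T1"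
    unfolding T1_def using g by simp
  moreover have "integrable lborel T2"
  proof (rule Bochner_Integration.integrable_bound[OF integrable_diff_avg[OF m b]])
    show "T2 \<in> borel_measurable lborel"
      unfolding T2_def by measurable
    show "AE x in lborel. norm (T2 x) \<le> norm (f x - avg f x)"
    proof (rule AE_I2)
      fix x
      have "\<bar>Wsh x * (f x - avg f x)\<bar> \<le> 1 * \<bar>f x - avg f x\<bar>"
        unfolding abs_mult by (rule mult_right_mono[OF abs_Wsh_le]) simp
      then show "norm (T2 x) \<le> norm (f x - avg f x)"
        unfolding T2_def by simp
    qed
  qed
  moreover have "integrable lborel T3"
  proof (rule Bochner_Integration.integrable_bound)
    show "integrable lborel (\<lambda>x. 6 * indicator {-1/2..1/2::real} x :: real)"
      by (intro integrable_mult_right integrable_indicator_Icc)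
    show "T3 \<in> borel_measurable lborel"
      unfolding T3_def by measurable
    show "AE x in lborel. norm (T3 x) \<le> norm (6 * indicator {-1/2..1/2::real} x :: real)"
      unfolding T3_def using order_trans[OF abs_shock_correction_le[OF abs_avg(1)] abs_ge_self]
      by (intro AE_I2) simp
  qed
  moreover have "integrable lborel T4"
    unfolding T4_def
    by (rule taylor_remainder_integral_bound(1)[OF measurable_avg_Wsh avg_f integrable_sq_avg_diff_Wsh[OF assms]])
       (use abs_avg in \<open>auto simp: abs_le_iff\<close>)
  ultimately show ?thesis
    unfolding split by (intro Bochner_Integration.integrable_diff Bochner_Integration.integrable_add)
qed

lemma Lfun_segment_le:
  assumes f: "profile f" and t: "0 \<le> t" "t \<le> 1"
  defines "V \<equiv> \<lambda>x. Top dPhi f x - f x"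
  shows "Lfun Phi (\<lambda>x. f x + t * V x)
    \<le> Lfun Phi f - t * (LBINT x. (V x)\<^sup>2) + t\<^sup>2 * ((LBINT x. (V x)\<^sup>2) / 2 + M * (LBINT x. (avg V x)\<^sup>2))"
proof -
  define h where "h = (\<lambda>x. dPhi (avg f x))"
  define P where "P = Top dPhi f"
  have h: "profile h"
    unfolding h_def by (rule profile_dPhi_avg[OF f])
  have P: "profile P"
    unfolding P_def by (rule profile_Top[OF f])
  have P_eq: "avg h = P"
    unfolding P_def h_def Top_def ..
  have V_eq: "V = (\<lambda>x. P x - f x)"
    unfolding V_def P_def ..
  have U: "profile (\<lambda>x. f x + t * V x)"
    using profile_convex_comb[OF f P t] by (simp add: V_eq)
  have mf: "mono f" and mh: "mono h" and mP: "mono P"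
    using f h P unfolding profile_def by auto
  have bf: "\<And>y. \<bar>f y\<bar> \<le> 1" and bh: "\<And>y. \<bar>h y\<bar> \<le> 1" and bP: "\<And>y. \<bar>P y\<bar> \<le> 1"
    using f h P by (auto intro: profile_abs_le)
  have fm [measurable]: "f \<in> borel_measurable borel" and Pm [measurable]: "P \<in> borel_measurable borel"
    using f P by (simp_all add: profile_measurable)
  have Vm [measurable]: "V \<in> borel_measurable borel"
    unfolding V_eq by measurable
  have [measurable]: "avg f \<in> borel_measurable borel" "avg V \<in> borel_measurable borel"
    by (rule measurable_avg, measurable)+
  have avg_V: "avg V x = avg P x - avg f x" for x
    using avg_add_scaled[OF Pm bP fm bf, of "-1" x] by (simp add: V_eq)
  have bV: "\<bar>V y\<bar> \<le> 2" for y
    using bP[of y] bf[of y] unfolding V_eq by linarith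
  have avg_U: "avg (\<lambda>x. f x + t * V x) x = avg f x + t * avg V x" for x
    by (rule avg_add_scaled[OF fm bf Vm bV])
  have int_V: "integrable lborel (\<lambda>x. (V x)\<^sup>2)"
    unfolding V_eq by (rule integrable_sq_diff_profiles[OF P f])
  have int_avg_V: "integrable lborel (\<lambda>x. (avg V x)\<^sup>2)"
    unfolding avg_V by (rule integrable_sq_diff_profiles[OF profile_avg[OF P] profile_avg[OF f]])
  define N where "N = (LBINT x. (V x)\<^sup>2)"
  define K where "K = (LBINT x. (avg V x)\<^sup>2)"
  txt \<open>As \<open>P = \<A>h\<close>, the first order term \<open>t (f V - h \<A>V)\<close> of the energy density is \<open>-t V\<^sup>2\<close> plus
    \<open>t\<close> times a difference of two commutators, which integrate to zero.\<close>
  define Q1 where "Q1 = (\<lambda>x. avg h x * P x - h x * avg P x)"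
  define Q2 where "Q2 = (\<lambda>x. avg h x * f x - h x * avg f x)"
  define R where "R = (\<lambda>x. Phi (avg f x + t * avg V x) - Phi (avg f x) - h x * (avg f x + t * avg V x - avg f x))"
  have Q1: "has_bochner_integral lborel Q1 0"
    unfolding Q1_def by (rule avg_commutator_has_integral_0[OF mh bh mP bP])
  have Q2: "has_bochner_integral lborel Q2 0"
    unfolding Q2_def by (rule avg_commutator_has_integral_0[OF mh bh mf bf])
  have range: "avg f x \<in> {-1..1}" "avg f x + t * avg V x \<in> {-1..1}" for x
    using abs_avg_le[OF fm bf, of x] abs_avg_le[OF profile_measurable[OF U] profile_abs_le[OF U], of x]
    by (auto simp: avg_U abs_le_iff)
  have int_tV: "integrable lborel (\<lambda>x. (avg f x + t * avg V x - avg f x)\<^sup>2)"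
    using integrable_mult_right[OF int_avg_V, of "t\<^sup>2"] by (simp add: power_mult_distrib)
  have int_R: "integrable lborel R" and R_lower: "- (M * (LBINT x. (avg f x + t * avg V x - avg f x)\<^sup>2)) \<le> integral\<^sup>L lborel R"
    unfolding R_def h_def
    by (rule taylor_remainder_integral_bound[OF _ _ int_tV range]; measurable)+
  have "(LBINT x. (avg f x + t * avg V x - avg f x)\<^sup>2) = t\<^sup>2 * K"
    unfolding K_def by (simp add: power_mult_distrib)
  with R_lower have R_lower: "- (M * t\<^sup>2 * K) \<le> integral\<^sup>L lborel R"
    by simp
  have "energy_density Phi (\<lambda>x. f x + t * V x) x
      = energy_density Phi f x + (- t * (V x)\<^sup>2 + t * Q1 x - t * Q2 x + t\<^sup>2 / 2 * (V x)\<^sup>2 - R x)" for x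
    unfolding energy_density_def Q1_def Q2_def R_def avg_U avg_V P_eq
    by (simp add: V_eq power2_eq_square algebra_simps)
  moreover have "has_bochner_integral lborel
      (\<lambda>x. energy_density Phi f x + (- t * (V x)\<^sup>2 + t * Q1 x - t * Q2 x + t\<^sup>2 / 2 * (V x)\<^sup>2 - R x))
      (Lfun Phi f + (- t * N + t * 0 - t * 0 + t\<^sup>2 / 2 * N - integral\<^sup>L lborel R))"
    unfolding N_def Lfun_eq_integral_energy_density
    by (intro has_bochner_integral_add has_bochner_integral_diff has_bochner_integral_mult_right
        has_bochner_integral_integrable integrable_energy_density f int_V int_R Q1 Q2)
  ultimately have "Lfun Phi (\<lambda>x. f x + t * V x)
      = Lfun Phi f + (- t * N + t * 0 - t * 0 + t\<^sup>2 / 2 * N - integral\<^sup>L lborel R)"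
    by (simp add: Lfun_eq_integral_energy_density has_bochner_integral_iff)
  also have "\<dots> \<le> Lfun Phi f - t * N + t\<^sup>2 * (N / 2 + M * K)"
    using R_lower by (simp add: algebra_simps)
  finally show ?thesis
    unfolding N_def K_def .
qed

lemma local_min_profile_is_fixpoint:
  assumes f: "profile f" and "\<delta> > 0"
    and min: "\<And>U. profile U \<Longrightarrow> L2norm (\<lambda>x. U x - f x) < \<delta> \<Longrightarrow> Lfun Phi f \<le> Lfun Phi U"
  shows "AE x in lborel. f x = Top dPhi f x"
proof -
  define V where "V = (\<lambda>x. Top dPhi f x - f x)"
  define N where "N = (LBINT x. (V x)\<^sup>2)"
  define C where "C = N / 2 + M * (LBINT x. (avg V x)\<^sup>2)"
  have int_V: "integrable lborel (\<lambda>x. (V x)\<^sup>2)"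
    unfolding V_def by (rule integrable_sq_diff_profiles[OF profile_Top[OF f] f])
  have N_nonneg: "0 \<le> N"
    unfolding N_def by simp
  then have sqrt_pos: "0 < sqrt N + 1"
    by (simp add: add_nonneg_pos)
  have small: "N \<le> t * C" if t: "0 < t" "t < min 1 (\<delta> / (sqrt N + 1))" for t
  proof -
    have t01: "0 \<le> t" "t \<le> 1"
      using t by simp_all
    have "t * sqrt N \<le> t * (sqrt N + 1)"
      using t by simp
    also have "\<dots> < \<delta>"
      using t sqrt_pos by (simp add: less_divide_eq)
    finally have "L2norm (\<lambda>x. (f x + t * V x) - f x) < \<delta>"
      using t by (simp add: L2norm_def N_def power_mult_distrib real_sqrt_mult)
    then have "Lfun Phi f \<le> Lfun Phi (\<lambda>x. f x + t * V x)"
      by (rule min[rotated]) (use profile_convex_comb[OF f profile_Top[OF f] t01] in \<open>simp add: V_def\<close>)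
    also have "\<dots> \<le> Lfun Phi f - t * N + t\<^sup>2 * C"
      using Lfun_segment_le[OF f t01] unfolding V_def N_def C_def by simp
    finally have "t * N \<le> t * (t * C)"
      by (simp add: power2_eq_square algebra_simps)
    then show ?thesis
      using \<open>0 < t\<close> by (simp add: mult_le_cancel_left_pos)
  qed
  have "N \<le> 0"
    by (rule nonpos_if_le_small_multiples[of "min 1 (\<delta> / (sqrt N + 1))" N C, OF _ small])
       (use \<open>\<delta> > 0\<close> sqrt_pos in simp)
  then have "N = 0"
    using N_nonneg by simp
  then have "AE x in lborel. (V x)\<^sup>2 = 0"
    using integral_nonneg_eq_0_iff_AE[OF int_V] unfolding N_def by simp
  then show ?thesis
    by eventually_elim (simp add: V_def)
qed

end

section \<open>Potentials with continuous second derivative\<close>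

lemma abs_diff_le_if_deriv_bounded:
  fixes f f' :: "real \<Rightarrow> real"
  assumes "\<And>x. (f has_real_derivative f' x) (at x)" and "\<And>z. z \<in> {a..b} \<Longrightarrow> \<bar>f' z\<bar> \<le> M"
    and "x \<in> {a..b}" and "y \<in> {a..b}"
  shows "\<bar>f x - f y\<bar> \<le> M * \<bar>x - y\<bar>"
proof -
  have ordered: "\<bar>f v - f u\<bar> \<le> M * (v - u)" if "u < v" "u \<in> {a..b}" "v \<in> {a..b}" for u v
  proof -
    obtain z where z: "u < z" "z < v" "f v - f u = (v - u) * f' z"
      using MVT2[OF \<open>u < v\<close>, of f f'] assms(1) by blast
    then have "\<bar>f v - f u\<bar> = (v - u) * \<bar>f' z\<bar>"
      by (simp add: abs_mult)
    also have "\<dots> \<le> (v - u) * M"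
      using z that by (intro mult_left_mono assms(2)) auto
    finally show ?thesis
      by (simp add: mult.commute)
  qed
  show ?thesis
  proof (cases x y rule: linorder_cases)
    case less
    then have "\<bar>x - y\<bar> = y - x"
      by (simp add: abs_if)
    then show ?thesis
      using ordered[OF less assms(3,4)] abs_minus_commute[of "f x" "f y"] by simp
  next
    case greater
    then show ?thesis
      using ordered[OF greater assms(4,3)] by (simp add: abs_of_pos)
  qed simp
qed

lemma taylor_remainder_le:
  fixes f f' :: "real \<Rightarrow> real"
  assumes "\<And>x. (f has_real_derivative f' x) (at x)" and "0 \<le> M"
    and "\<And>x y. x \<in> {a..b} \<Longrightarrow> y \<in> {a..b} \<Longrightarrow> \<bar>f' x - f' y\<bar> \<le> M * \<bar>x - y\<bar>"
    and "x \<in> {a..b}" and "y \<in> {a..b}"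
  shows "\<bar>f y - f x - f' x * (y - x)\<bar> \<le> M * (y - x)\<^sup>2"
proof -
  obtain z where z: "z \<in> {a..b}" "\<bar>z - x\<bar> \<le> \<bar>y - x\<bar>" "f y - f x = (y - x) * f' z"
  proof (cases x y rule: linorder_cases)
    case less
    then obtain z where "x < z" "z < y" "f y - f x = (y - x) * f' z"
      using MVT2[OF less, of f f'] assms(1) by blast
    then show ?thesis
      using assms(4,5) by (intro that[of z]) (auto simp: abs_if)
  next
    case equal
    then show ?thesis
      using that[of x] assms(4) by auto
  next
    case greater
    then obtain z where "y < z" "z < x" "f x - f y = (x - y) * f' z"
      using MVT2[OF greater, of f f'] assms(1) by blast
    then show ?thesis
      using assms(4,5) by (intro that[of z]) (auto simp: abs_if algebra_simps)
  qed
  have "f y - f x - f' x * (y - x) = (y - x) * (f' z - f' x)"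
    using z(3) by (auto simp: algebra_simps)
  then have "\<bar>f y - f x - f' x * (y - x)\<bar> = \<bar>y - x\<bar> * \<bar>f' z - f' x\<bar>"
    by (simp add: abs_mult)
  also have "\<dots> \<le> \<bar>y - x\<bar> * (M * \<bar>y - x\<bar>)"
    using assms(3)[OF z(1) assms(4)] mult_left_mono[OF z(2) assms(2)]
    by (intro mult_left_mono) (auto simp: abs_minus_commute)
  also have "\<dots> = M * (\<bar>y - x\<bar> * \<bar>y - x\<bar>)"
    by (simp add: mult_ac)
  also have "\<dots> = M * (y - x)\<^sup>2"
    by (simp add: power2_eq_square)
  finally show ?thesis .
qed

lemma front_potential_if_C2:
  fixes Phi dPhi ddPhi :: "real \<Rightarrow> real"
  assumes d1: "\<And>x. (Phi has_real_derivative dPhi x) (at x)"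
    and d2: "\<And>x. (dPhi has_real_derivative ddPhi x) (at x)"
    and cont: "continuous_on UNIV ddPhi"
    and "dPhi (-1) = -1" and "dPhi 1 = 1"
    and nonneg: "\<And>x. x \<in> {-1..1} \<Longrightarrow> ddPhi x \<ge> 0"
  obtains M where "front_potential Phi dPhi M"
proof -
  have "continuous_on {-1..1} ddPhi"
    using cont by (rule continuous_on_subset) simp
  then obtain M where "M \<ge> 0" and M: "\<And>z. z \<in> {-1..1} \<Longrightarrow> \<bar>ddPhi z\<bar> \<le> M"
    using continuous_on_compact_bound[OF compact_Icc] by (metis real_norm_def)
  have lipschitz: "\<bar>dPhi x - dPhi y\<bar> \<le> M * \<bar>x - y\<bar>" if "x \<in> {-1..1}" "y \<in> {-1..1}" for x y
    using abs_diff_le_if_deriv_bounded[OF d2 M that] .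
  have "front_potential Phi dPhi M"
  proof
    show "\<bar>Phi y - Phi x - dPhi x * (y - x)\<bar> \<le> M * (y - x)\<^sup>2" if "x \<in> {-1..1}" "y \<in> {-1..1}" for x y
      using taylor_remainder_le[OF d1 \<open>M \<ge> 0\<close> lipschitz that] .
    show "dPhi x \<le> dPhi y" if "x \<in> {-1..1}" "y \<in> {-1..1}" "x \<le> y" for x y
    proof (rule DERIV_nonneg_imp_nondecreasing[OF \<open>x \<le> y\<close>])
      fix z
      assume "x \<le> z" "z \<le> y"
      then show "\<exists>d. DERIV dPhi z :> d \<and> d \<ge> 0"
        using d2[of z] nonneg[of z] that by (intro exI[of _ "ddPhi z"]) auto
    qed
    show "continuous_on UNIV Phi" "continuous_on UNIV dPhi"
      using d1 d2 by (auto intro!: continuous_at_imp_continuous_on DERIV_isCont)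
  qed (use lipschitz assms in auto)
  then show ?thesis
    by (rule that)
qed

theorem lemma3p7:
  fixes Phi dPhi ddPhi :: "real \<Rightarrow> real" and W :: "real \<Rightarrow> real" and \<delta> :: real
  assumes d1: "\<And>x. (Phi has_real_derivative dPhi x) (at x)"
    and d2: "\<And>x. (dPhi has_real_derivative ddPhi x) (at x)"
    and cont: "continuous_on UNIV ddPhi"
    and "dPhi (-1) = -1" and "dPhi 1 = 1"
    and "\<And>x. x \<in> {-1..1} \<Longrightarrow> ddPhi x \<ge> 0"
    and "Phi (-1) = Phi 1"
    and "ddPhi (-1) < 1" and "ddPhi 1 < 1"
    and "\<And>w. w \<in> {-1<..<1} \<Longrightarrow> integral {-1..w} (\<lambda>v. v - dPhi v) > 0"
    and WC: "W \<in> Ccone"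
    and "\<delta> > 0"
    and locmin: "\<And>U. U \<in> Ccone \<Longrightarrow> L2norm (\<lambda>\<phi>. U \<phi> - W \<phi>) < \<delta> \<Longrightarrow> Lfun Phi W \<le> Lfun Phi U"
  shows "AE \<phi> in lborel. W \<phi> = Top dPhi W \<phi>"
proof -
  obtain M where "front_potential Phi dPhi M"
    using front_potential_if_C2[OF d1 d2 cont assms(4-6)] .
  then interpret front_potential Phi dPhi M .
  obtain f where f: "profile f" and Wf: "AE x in lborel. W x = f x"
    using Ccone_AE_profile[OF WC] .
  have Wm [measurable]: "W \<in> borel_measurable borel" and fm [measurable]: "f \<in> borel_measurable borel"
    using WC profile_measurable[OF f] by (auto simp: Ccone_def Hspace_def)
  have "AE x in lborel. f x = Top dPhi f x"
  proof (rule local_min_profile_is_fixpoint[OF f \<open>\<delta> > 0\<close>])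
    fix U
    assume U: "profile U" and "L2norm (\<lambda>x. U x - f x) < \<delta>"
    have [measurable]: "U \<in> borel_measurable borel"
      using U by (rule profile_measurable)
    have "L2norm (\<lambda>x. U x - W x) = L2norm (\<lambda>x. U x - f x)"
      by (rule L2norm_cong_AE) (use Wf in \<open>eventually_elim, simp\<close>, measurable)
    then have "Lfun Phi W \<le> Lfun Phi U"
      using locmin[OF profile_in_Ccone[OF U]] \<open>L2norm (\<lambda>x. U x - f x) < \<delta>\<close> by simp
    then show "Lfun Phi f \<le> Lfun Phi U"
      using Lfun_cong_AE[OF Wf Wm fm measurable_Phi] by simp
  qed
  then show ?thesis
    using Wf unfolding Top_def avg_cong_AE[OF Wf Wm fm] by eventually_elim simp
qed

end
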